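(* Let $T$ be a directed tree with at least one edge whose underlying undirected graph is a path or a caterpillar. Then $T$ has span $1$.
   Context: A directed tree is a DAG (directed acyclic graph) whose underlying undirected graph is a tree. A caterpillar is a tree such that removing all its leaves yields a path (possibly empty or a single vertex). An upward-planar layered drawing of a DAG $G$ maps each vertex $v$ to a point in the plane whose y-coordinate $y(v)$ is an integer, and each edge $(u,v)$ (directed from tail $u$ to head $v$) to a strictly y-monotone curve going upward from $u$ to $v$ (so $y(u)<y(v)$), such that no two edges intersect except at common endpoints. The span of an edge $(u,v)$ in such a drawing $\Gamma$ is $y(v)-y(u)$; the span of $\Gamma$ is the maximum span of its edges; the span of an upward-planar DAG is the minimum span over all its upward-planar layered drawings. No embedding is prescribed. *)

theory Defs
  imports "HOL-Analysis.Analysis"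
begin

definition underlying :: "('a \<times> 'a) set \<Rightarrow> 'a set set" where
  "underlying E = {{u, v} | u v. (u, v) \<in> E}"

definition is_walk :: "'a set set \<Rightarrow> 'a list \<Rightarrow> bool" where
  "is_walk U xs \<longleftrightarrow> xs \<noteq> [] \<and> (\<forall>i. Suc i < length xs \<longrightarrow> {xs ! i, xs ! Suc i} \<in> U)"

definition ug_connected :: "'a set \<Rightarrow> 'a set set \<Rightarrow> bool" where
  "ug_connected V U \<longleftrightarrow>
     (\<forall>u\<in>V. \<forall>v\<in>V. \<exists>xs. is_walk U xs \<and> set xs \<subseteq> V \<and> hd xs = u \<and> last xs = v)"

definition has_cycle :: "'a set \<Rightarrow> 'a set set \<Rightarrow> bool" where
  "has_cycle V U \<longleftrightarrow>
     (\<exists>xs. length xs \<ge> 3 \<and> distinct xs \<and> set xs \<subseteq> V \<and> is_walk U xs \<and> {last xs, hd xs} \<in> U)"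

definition is_ug_tree :: "'a set \<Rightarrow> 'a set set \<Rightarrow> bool" where
  "is_ug_tree V U \<longleftrightarrow> finite V \<and> V \<noteq> {} \<and> (\<forall>e\<in>U. e \<subseteq> V \<and> card e = 2)
     \<and> ug_connected V U \<and> \<not> has_cycle V U"

definition is_path_graph :: "'a set \<Rightarrow> 'a set set \<Rightarrow> bool" where
  "is_path_graph V U \<longleftrightarrow>
     (\<exists>xs. distinct xs \<and> set xs = V \<and> U = {{xs ! i, xs ! Suc i} | i. Suc i < length xs})"

definition ug_degree :: "'a set set \<Rightarrow> 'a \<Rightarrow> nat" where
  "ug_degree U v = card {e \<in> U. v \<in> e}"

definition leaves :: "'a set \<Rightarrow> 'a set set \<Rightarrow> 'a set" where
  "leaves V U = {v \<in> V. ug_degree U v = 1}"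

definition is_caterpillar :: "'a set \<Rightarrow> 'a set set \<Rightarrow> bool" where
  "is_caterpillar V U \<longleftrightarrow> is_ug_tree V U \<and>
     (let W = V - leaves V U in is_path_graph W {e \<in> U. e \<subseteq> W})"

definition is_dag :: "'a set \<Rightarrow> ('a \<times> 'a) set \<Rightarrow> bool" where
  "is_dag V E \<longleftrightarrow> finite V \<and> E \<subseteq> V \<times> V \<and> acyclic E"

definition directed_tree :: "'a set \<Rightarrow> ('a \<times> 'a) set \<Rightarrow> bool" where
  "directed_tree V E \<longleftrightarrow> is_dag V E \<and> (\<forall>u v. (u, v) \<in> E \<longrightarrow> (v, u) \<notin> E)
     \<and> is_ug_tree V (underlying E)"

definition upward_planar_layered_drawing ::
  "'a set \<Rightarrow> ('a \<times> 'a) set \<Rightarrow> ('a \<Rightarrow> real) \<Rightarrow> ('a \<Rightarrow> int)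
     \<Rightarrow> ('a \<times> 'a \<Rightarrow> real \<Rightarrow> real \<times> real) \<Rightarrow> bool" where
  "upward_planar_layered_drawing V E x y c \<longleftrightarrow>
     (let pt = (\<lambda>v. (x v, real_of_int (y v))) in
       inj_on pt V \<and>
       (\<forall>e\<in>E. path (c e) \<and> pathstart (c e) = pt (fst e) \<and> pathfinish (c e) = pt (snd e)
              \<and> strict_mono_on {0..1} (\<lambda>t. snd (c e t))) \<and>
       (\<forall>e\<in>E. \<forall>w\<in>V. w \<noteq> fst e \<and> w \<noteq> snd e \<longrightarrow> pt w \<notin> path_image (c e)) \<and>
       (\<forall>e\<in>E. \<forall>f\<in>E. e \<noteq> f \<longrightarrow>
          path_image (c e) \<inter> path_image (c f) \<subseteq> pt ` ({fst e, snd e} \<inter> {fst f, snd f})))"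

definition edge_span :: "('a \<Rightarrow> int) \<Rightarrow> 'a \<times> 'a \<Rightarrow> int" where
  "edge_span y e = y (snd e) - y (fst e)"

definition drawing_span :: "('a \<times> 'a) set \<Rightarrow> ('a \<Rightarrow> int) \<Rightarrow> int" where
  "drawing_span E y = Max (edge_span y ` E)"

definition drawing_spans :: "'a set \<Rightarrow> ('a \<times> 'a) set \<Rightarrow> int set" where
  "drawing_spans V E = {drawing_span E y | x y c. upward_planar_layered_drawing V E x y c}"

definition has_span :: "'a set \<Rightarrow> ('a \<times> 'a) set \<Rightarrow> int \<Rightarrow> bool" where
  "has_span V E s \<longleftrightarrow> s \<in> drawing_spans V E \<and> (\<forall>t\<in>drawing_spans V E. s \<le> t)"

end

theory Submission
  imports Defs
begin

(*
  Paths and caterpillars consist of a spine x_0, ..., x_k together with leaves, each adjacent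
  to one spine vertex. Put x_i at abscissa i, and walk along the spine going up or down one
  layer according to the orientation of each spine edge; put every leaf one layer above or
  below its spine neighbour x_i, at its own abscissa in the open interval (i, i + 1). All edges
  then have span 1, and straight segments give an upward-planar drawing: each edge lies in
  the strip of some spine vertex x_i and is incident to x_i, so two edges leaving the same
  layer either lie in strips with disjoint interiors or share a vertex. Span 1 is optimal as
  layers are integers and edges point strictly upwards.
*)

lemma of_int_add_unit_interval_eq_of_int:
  assumes "0 \<le> t" "t \<le> 1" "real_of_int a + t = real_of_int b"
  shows "t = 0 \<or> t = 1"
proof -
  have "b - a = 0 \<or> b - a = 1"
    using assms by linarith
  then show ?thesis
    using assms(3) by (auto simp: algebra_simps)
qed

lemma of_int_add_frac_cancel:
  assumes "0 \<le> s" "s < 1" "0 \<le> t" "t < 1" "real_of_int a + s = real_of_int b + t"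
  shows "a = b \<and> s = t"
proof -
  have "\<lfloor>s\<rfloor> = 0" "\<lfloor>t\<rfloor> = 0"
    using assms by (simp_all add: floor_eq_iff)
  then have "a = b"
    using arg_cong[OF assms(5), of floor] by simp
  then show ?thesis
    using assms(5) by simp
qed

lemma convex_combination_eq_0_same_sign:
  fixes a b t :: real
  assumes "0 < t" "t < 1" "0 \<le> a * b" "(1 - t) * a + t * b = 0"
  shows "a = 0 \<and> b = 0"
proof -
  have "((1 - t) * a) * (t * b) = ((1 - t) * t) * (a * b)"
    by (simp add: algebra_simps)
  also have "\<dots> \<ge> 0"
    using assms(1-3) by simp
  finally have "0 \<le> ((1 - t) * a) * (t * b)" .
  moreover have "t * b = - ((1 - t) * a)"
    using assms(4) by simp
  ultimately have "((1 - t) * a) * ((1 - t) * a) = 0"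
    using zero_le_square[of "(1 - t) * a"] by simp
  then have "(1 - t) * a = 0"
    by simp
  then show ?thesis
    using assms by simp
qed

section \<open>Straight-line drawings with unit span\<close>

definition segment_drawing :: "('a \<Rightarrow> real) \<Rightarrow> ('a \<Rightarrow> int) \<Rightarrow> 'a \<times> 'a \<Rightarrow> real \<Rightarrow> real \<times> real" where
  "segment_drawing x y e =
     linepath (x (fst e), real_of_int (y (fst e))) (x (snd e), real_of_int (y (snd e)))"

definition noncrossing :: "('a \<times> 'a) set \<Rightarrow> ('a \<Rightarrow> real) \<Rightarrow> ('a \<Rightarrow> int) \<Rightarrow> bool" where
  "noncrossing E x y \<longleftrightarrow> (\<forall>e\<in>E. \<forall>f\<in>E. y (fst e) = y (fst f) \<longrightarrow>
     \<not> (x (fst e) < x (fst f) \<and> x (snd f) < x (snd e)))"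

lemma segment_drawing_unit_span:
  assumes "y (snd e) = y (fst e) + 1"
  shows "segment_drawing x y e t = ((1 - t) * x (fst e) + t * x (snd e), real_of_int (y (fst e)) + t)"
  using assms by (simp add: segment_drawing_def linepath_def algebra_simps)

(* With unit spans, two segments meet away from their endpoints only if they leave the same
   layer and their endpoints appear in opposite orders on the two layers. *)
context
  fixes V :: "'a set" and E :: "('a \<times> 'a) set" and x :: "'a \<Rightarrow> real" and y :: "'a \<Rightarrow> int"
  assumes edges_subset: "E \<subseteq> V \<times> V"
    and inj_x: "inj_on x V"
    and unit_span: "\<And>e. e \<in> E \<Longrightarrow> y (snd e) = y (fst e) + 1"
    and noncrossing: "noncrossing E x y"
begin

lemma segment_drawing_through_vertex:
  assumes w: "w \<in> V" and e: "e \<in> E"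
    and on_e: "(x w, real_of_int (y w)) \<in> path_image (segment_drawing x y e)"
  shows "w = fst e \<or> w = snd e"
proof -
  obtain t where t: "0 \<le> t" "t \<le> 1" "(x w, real_of_int (y w)) = segment_drawing x y e t"
    using on_e by (auto simp: path_image_def)
  then have "real_of_int (y (fst e)) + t = real_of_int (y w)"
    by (simp add: segment_drawing_unit_span[OF unit_span[OF e]])
  then have "t = 0 \<or> t = 1"
    using t(1,2) by (rule of_int_add_unit_interval_eq_of_int[rotated 2])
  then have "x w = x (fst e) \<or> x w = x (snd e)"
    using t(3) by (auto simp: segment_drawing_unit_span[OF unit_span[OF e]])
  moreover have "fst e \<in> V" "snd e \<in> V"
    using e edges_subset by auto
  ultimately show ?thesis
    using w inj_x by (auto dest: inj_onD)
qed

lemma segment_drawing_inter: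
  assumes e: "e \<in> E" and f: "f \<in> E" and "e \<noteq> f"
    and z: "z \<in> path_image (segment_drawing x y e) \<inter> path_image (segment_drawing x y f)"
  shows "z \<in> (\<lambda>v. (x v, real_of_int (y v))) ` ({fst e, snd e} \<inter> {fst f, snd f})"
proof -
  have at_vertex: "z \<in> (\<lambda>v. (x v, real_of_int (y v))) ` ({fst e, snd e} \<inter> {fst f, snd f})"
    if "z = (x w, real_of_int (y w))" "w \<in> {fst e, snd e, fst f, snd f}" for w
  proof -
    have "w \<in> V"
      using that(2) e f edges_subset by auto
    then have "w \<in> {fst e, snd e} \<inter> {fst f, snd f}"
      using segment_drawing_through_vertex[OF _ e] segment_drawing_through_vertex[OF _ f] that z
      by auto
    then show ?thesis
      using that(1) by blast
  qed
  obtain t s where t: "0 \<le> t" "t \<le> 1" "z = segment_drawing x y e t"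
    and s: "0 \<le> s" "s \<le> 1" "z = segment_drawing x y f s"
    using z by (auto simp: path_image_def)
  note e_at = segment_drawing_unit_span[OF unit_span[OF e]]
  note f_at = segment_drawing_unit_span[OF unit_span[OF f]]
  show ?thesis
  proof (cases "t \<in> {0, 1} \<or> s \<in> {0, 1}")
    case True
    then have "\<exists>w \<in> {fst e, snd e, fst f, snd f}. z = (x w, real_of_int (y w))"
      using t(3) s(3) by (auto simp: segment_drawing_def linepath_0' linepath_1')
    then show ?thesis
      using at_vertex by blast
  next
    case False
    then have interior: "0 < t" "t < 1" "0 < s" "s < 1"
      using t s by auto
    have "real_of_int (y (fst e)) + t = real_of_int (y (fst f)) + s"
      using t(3) s(3) by (simp add: e_at f_at)
    then have level: "y (fst e) = y (fst f)" and "t = s"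
      using of_int_add_frac_cancel[of t s] interior by auto
    then have "(1 - t) * (x (fst e) - x (fst f)) + t * (x (snd e) - x (snd f)) = 0"
      using t(3) s(3) by (simp add: e_at f_at algebra_simps)
    moreover have "\<not> (x (fst e) < x (fst f) \<and> x (snd f) < x (snd e))"
      "\<not> (x (fst f) < x (fst e) \<and> x (snd e) < x (snd f))"
      using noncrossing e f level unfolding noncrossing_def by auto
    then have "0 \<le> (x (fst e) - x (fst f)) * (x (snd e) - x (snd f))"
      unfolding zero_le_mult_iff by linarith
    ultimately have "x (fst e) - x (fst f) = 0 \<and> x (snd e) - x (snd f) = 0"
      using convex_combination_eq_0_same_sign interior(1,2) by blast
    moreover have "fst e \<in> V" "snd e \<in> V" "fst f \<in> V" "snd f \<in> V"
      using e f edges_subset by auto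
    ultimately have "e = f"
      using inj_x by (auto dest: inj_onD simp: prod_eq_iff)
    then show ?thesis
      using \<open>e \<noteq> f\<close> by contradiction
  qed
qed

lemma upward_planar_layered_drawing_segment_drawing:
  "upward_planar_layered_drawing V E x y (segment_drawing x y)"
  unfolding upward_planar_layered_drawing_def Let_def
proof (intro conjI ballI impI)
  show "inj_on (\<lambda>v. (x v, real_of_int (y v))) V"
    using inj_x by (auto simp: inj_on_def)
next
  fix e assume e: "e \<in> E"
  show "path (segment_drawing x y e)"
    "pathstart (segment_drawing x y e) = (x (fst e), real_of_int (y (fst e)))"
    "pathfinish (segment_drawing x y e) = (x (snd e), real_of_int (y (snd e)))"
    by (simp_all add: segment_drawing_def)
  show "strict_mono_on {0..1} (\<lambda>t. snd (segment_drawing x y e t))"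
    by (simp add: segment_drawing_unit_span[OF unit_span[OF e]] strict_mono_on_def)
qed (use segment_drawing_through_vertex segment_drawing_inter in blast)+

end

lemma edge_span_pos:
  assumes "upward_planar_layered_drawing V E x y c" and "e \<in> E"
  shows "0 < edge_span y e"
proof -
  have "pathstart (c e) = (x (fst e), real_of_int (y (fst e)))"
    "pathfinish (c e) = (x (snd e), real_of_int (y (snd e)))"
    "strict_mono_on {0..1} (\<lambda>t. snd (c e t))"
    using assms unfolding upward_planar_layered_drawing_def Let_def by auto
  then have "snd (c e 0) < snd (c e 1)"
    by (simp add: strict_mono_on_def)
  then have "real_of_int (y (fst e)) < real_of_int (y (snd e))"
    using \<open>pathstart (c e) = _\<close> \<open>pathfinish (c e) = _\<close>
    by (simp add: pathstart_def pathfinish_def)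
  then show ?thesis
    by (simp add: edge_span_def)
qed

lemma has_span_1I:
  assumes "finite E" and "E \<noteq> {}" and drawing: "upward_planar_layered_drawing V E x y c"
    and unit: "\<And>e. e \<in> E \<Longrightarrow> edge_span y e = 1"
  shows "has_span V E 1"
proof -
  have "drawing_span E y = 1"
    using assms(2) unit by (simp add: drawing_span_def image_constant_conv)
  then have "1 \<in> drawing_spans V E"
    using drawing unfolding drawing_spans_def by (metis (mono_tags, lifting) mem_Collect_eq)
  moreover have "1 \<le> drawing_span E y'" if "upward_planar_layered_drawing V E x' y' c'" for x' y' c'
  proof -
    obtain e where "e \<in> E"
      using assms(2) by blast
    then have "1 \<le> edge_span y' e"
      using edge_span_pos[OF that] by fastforce
    also have "\<dots> \<le> drawing_span E y'"
      using \<open>e \<in> E\<close> assms(1) by (simp add: drawing_span_def)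
    finally show ?thesis .
  qed
  ultimately show ?thesis
    unfolding has_span_def drawing_spans_def by blast
qed

(* Two edges in the same block share the hub, which cannot be the tail of one and the head of
   the other as both tails lie on the same layer; edges in different blocks are separated by
   their strips. *)
lemma noncrossing_by_blocks:
  fixes x :: "'a \<Rightarrow> real" and block :: "'a \<times> 'a \<Rightarrow> nat" and hub :: "nat \<Rightarrow> 'a"
  assumes unit_span: "\<And>e. e \<in> E \<Longrightarrow> y (snd e) = y (fst e) + 1"
    and hub: "\<And>e. e \<in> E \<Longrightarrow> hub (block e) \<in> {fst e, snd e}"
    and strip: "\<And>e v. e \<in> E \<Longrightarrow> v \<in> {fst e, snd e} \<Longrightarrow>
                  real (block e) \<le> x v \<and> x v \<le> real (block e) + 1"
  shows "noncrossing E x y"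
  unfolding noncrossing_def
proof (intro ballI impI notI)
  fix e f assume e: "e \<in> E" and f: "f \<in> E" and level: "y (fst e) = y (fst f)"
    and crossing: "x (fst e) < x (fst f) \<and> x (snd f) < x (snd e)"
  consider "block e = block f" | "block e < block f" | "block f < block e"
    by linarith
  then show False
  proof cases
    case 1
    then obtain h where "h \<in> {fst e, snd e}" "h \<in> {fst f, snd f}"
      using hub[OF e] hub[OF f] by metis
    then show False
      using crossing level unit_span[OF e] unit_span[OF f] by auto
  next
    case 2
    then have "real (block e) + 1 \<le> real (block f)"
      by simp
    moreover have "x (snd e) \<le> real (block e) + 1" "real (block f) \<le> x (snd f)"
      using strip[OF e, of "snd e"] strip[OF f, of "snd f"] by simp_all
    ultimately show False
      using crossing by linarith
  next
    case 3
    then have "real (block f) + 1 \<le> real (block e)"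
      by simp
    moreover have "x (fst f) \<le> real (block f) + 1" "real (block e) \<le> x (fst e)"
      using strip[OF e, of "fst e"] strip[OF f, of "fst f"] by simp_all
    ultimately show False
      using crossing by linarith
  qed
qed

section \<open>Spines with pendant leaves\<close>

locale spine_decomposition =
  fixes V :: "'a set" and E :: "('a \<times> 'a) set" and xs :: "'a list" and att :: "'a \<Rightarrow> 'a"
  assumes finite_vertices: "finite V"
    and edges_subset: "E \<subseteq> V \<times> V"
    and asym_edges: "(u, v) \<in> E \<Longrightarrow> (v, u) \<notin> E"
    and distinct_spine: "distinct xs"
    and att_in_spine: "l \<in> V - set xs \<Longrightarrow> att l \<in> set xs"
    and edge_cases: "(u, v) \<in> E \<Longrightarrow>
       (\<exists>i. Suc i < length xs \<and> {u, v} = {xs ! i, xs ! Suc i})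
       \<or> (u \<in> V - set xs \<and> v = att u) \<or> (v \<in> V - set xs \<and> u = att v)"
begin

definition idx :: "'a \<Rightarrow> nat" where
  "idx v = (THE i. i < length xs \<and> xs ! i = v)"

lemma idx_nth: "i < length xs \<Longrightarrow> idx (xs ! i) = i"
  unfolding idx_def using distinct_spine by (auto simp: nth_eq_iff_index_eq)

lemma idx_less_nth_idx:
  assumes "v \<in> set xs"
  shows "idx v < length xs \<and> xs ! idx v = v"
  using assms idx_nth by (auto simp: in_set_conv_nth)

primrec spine_level :: "nat \<Rightarrow> int" where
  "spine_level 0 = 0"
| "spine_level (Suc i) = spine_level i + (if (xs ! i, xs ! Suc i) \<in> E then 1 else -1)"

definition level :: "'a \<Rightarrow> int" where
  "level v = (if v \<in> set xs then spine_level (idx v)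
     else spine_level (idx (att v)) + (if (att v, v) \<in> E then 1 else -1))"

(* Leaves attached to the same spine vertex get distinct offsets since to_nat_on V is
   injective on the finite set V. *)
definition offset :: "'a \<Rightarrow> real" where
  "offset v = 1 / (real (to_nat_on V v) + 2)"

definition pos :: "'a \<Rightarrow> real" where
  "pos v = (if v \<in> set xs then real (idx v) else real (idx (att v)) + offset v)"

definition block :: "'a \<times> 'a \<Rightarrow> nat" where
  "block e = (if fst e \<in> set xs \<and> snd e \<in> set xs then min (idx (fst e)) (idx (snd e))
     else if fst e \<in> set xs then idx (fst e) else idx (snd e))"

lemma offset_bounds: "0 < offset v" "offset v < 1"
  by (simp_all add: offset_def)

lemma inj_on_pos: "inj_on pos V"
proof (rule inj_onI)
  fix a b assume a: "a \<in> V" and b: "b \<in> V" and "pos a = pos b"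
  define anchor where "anchor v = (if v \<in> set xs then v else att v)" for v
  define frac where "frac v = (if v \<in> set xs then 0 else offset v)" for v
  have frac_bounds: "0 \<le> frac v" "frac v < 1" for v
    using offset_bounds[of v] by (simp_all add: frac_def)
  have "pos v = real_of_int (int (idx (anchor v))) + frac v" for v
    by (simp add: pos_def frac_def anchor_def)
  then have "real_of_int (int (idx (anchor a))) + frac a = real_of_int (int (idx (anchor b))) + frac b"
    using \<open>pos a = pos b\<close> by simp
  from of_int_add_frac_cancel[OF frac_bounds frac_bounds this]
  have idx_eq: "idx (anchor a) = idx (anchor b)" and frac_eq: "frac a = frac b"
    by simp_all
  consider "a \<in> set xs" "b \<in> set xs" | "a \<notin> set xs" "b \<notin> set xs"
    | "(a \<in> set xs) \<noteq> (b \<in> set xs)"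
    by blast
  then show "a = b"
  proof cases
    case 1
    then show ?thesis
      using idx_eq idx_less_nth_idx by (metis anchor_def)
  next
    case 2
    then have "to_nat_on V a = to_nat_on V b"
      using frac_eq by (simp add: frac_def offset_def)
    then show ?thesis
      using finite_vertices a b by (simp add: countable_finite)
  next
    case 3
    then show ?thesis
      using frac_eq offset_bounds(1)[of a] offset_bounds(1)[of b] by (auto simp: frac_def)
  qed
qed

lemma level_nth: "i < length xs \<Longrightarrow> level (xs ! i) = spine_level i"
  by (simp add: level_def idx_nth)

lemma pos_nth: "i < length xs \<Longrightarrow> pos (xs ! i) = real i"
  by (simp add: pos_def idx_nth)

lemma level_edge:
  assumes uv: "(u, v) \<in> E"
  shows "level v = level u + 1"
  using edge_cases[OF uv]
proof (elim disjE exE conjE)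
  fix i assume i: "Suc i < length xs" and "{u, v} = {xs ! i, xs ! Suc i}"
  then consider "u = xs ! i" "v = xs ! Suc i" | "u = xs ! Suc i" "v = xs ! i"
    by (auto simp: doubleton_eq_iff)
  then show ?thesis
  proof cases
    case 1
    then show ?thesis
      using uv i by (simp add: level_nth)
  next
    case 2
    then have "(xs ! i, xs ! Suc i) \<notin> E"
      using uv asym_edges by blast
    then show ?thesis
      using 2 i by (simp add: level_nth)
  qed
next
  assume u: "u \<in> V - set xs" and v: "v = att u"
  then have "v \<in> set xs" "(v, u) \<notin> E"
    using att_in_spine asym_edges uv by blast+
  then show ?thesis
    using u v by (simp add: level_def)
next
  assume v: "v \<in> V - set xs" and u: "u = att v"
  then have "u \<in> set xs"
    using att_in_spine by blast
  then show ?thesis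
    using u v uv by (simp add: level_def)
qed

lemma edge_block:
  assumes uv: "(u, v) \<in> E"
  shows "xs ! block (u, v) \<in> {u, v} \<and>
    (\<forall>w\<in>{u, v}. real (block (u, v)) \<le> pos w \<and> pos w \<le> real (block (u, v)) + 1)"
  using edge_cases[OF uv]
proof (elim disjE exE conjE)
  fix i assume i: "Suc i < length xs" and uv_i: "{u, v} = {xs ! i, xs ! Suc i}"
  then have "block (u, v) = i"
    using idx_nth[of i] idx_nth[of "Suc i"] by (auto simp: block_def doubleton_eq_iff)
  then show ?thesis
    using i uv_i pos_nth[of i] pos_nth[of "Suc i"] by auto
next
  assume u: "u \<in> V - set xs" and v: "v = att u"
  then have "v \<in> set xs"
    using att_in_spine by blast
  then show ?thesis
    using u v idx_less_nth_idx[of v] offset_bounds[of u] by (simp add: block_def pos_def)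
next
  assume v: "v \<in> V - set xs" and u: "u = att v"
  then have "u \<in> set xs"
    using att_in_spine by blast
  then show ?thesis
    using u v idx_less_nth_idx[of u] offset_bounds[of v] by (simp add: block_def pos_def)
qed

lemma has_span_1:
  assumes "E \<noteq> {}"
  shows "has_span V E 1"
proof -
  have unit_span: "level (snd e) = level (fst e) + 1" if "e \<in> E" for e
    using level_edge[of "fst e" "snd e"] that by simp
  have "noncrossing E pos level"
  proof (rule noncrossing_by_blocks[where block = block and hub = "(!) xs"])
    fix e w assume "e \<in> E"
    then show "level (snd e) = level (fst e) + 1"
      by (rule unit_span)
    show "xs ! block e \<in> {fst e, snd e}"
      using edge_block[of "fst e" "snd e"] \<open>e \<in> E\<close> by simp
    assume "w \<in> {fst e, snd e}"
    then show "real (block e) \<le> pos w \<and> pos w \<le> real (block e) + 1"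
      using edge_block[of "fst e" "snd e"] \<open>e \<in> E\<close> by auto
  qed
  with edges_subset inj_on_pos unit_span
  have drawing: "upward_planar_layered_drawing V E pos level (segment_drawing pos level)"
    by (rule upward_planar_layered_drawing_segment_drawing)
  have "finite E"
    using finite_vertices edges_subset finite_subset by blast
  then show ?thesis
    using has_span_1I[OF _ assms drawing] unit_span by (simp add: edge_span_def)
qed

end

section \<open>Paths and caterpillars\<close>

lemma in_underlyingI: "(u, v) \<in> E \<Longrightarrow> {u, v} \<in> underlying E"
  unfolding underlying_def by blast

lemma leaf_edges_singleton:
  assumes "l \<in> leaves V U"
  obtains s where "{e \<in> U. l \<in> e} = {s}"
proof -
  have "card {e \<in> U. l \<in> e} = 1"
    using assms by (simp add: leaves_def ug_degree_def)
  then show ?thesis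
    using that by (rule card_1_singletonE)
qed

lemma leaf_edge_unique:
  assumes "l \<in> leaves V U" "e \<in> U" "l \<in> e" "e' \<in> U" "l \<in> e'"
  shows "e = e'"
proof -
  obtain s where s: "{e \<in> U. l \<in> e} = {s}"
    using assms(1) by (rule leaf_edges_singleton)
  have "e \<in> {e \<in> U. l \<in> e}" "e' \<in> {e \<in> U. l \<in> e}"
    using assms(2-5) by simp_all
  then show ?thesis
    unfolding s by simp
qed

lemma leaf_edge_exists:
  assumes "l \<in> leaves V U"
  shows "\<exists>e\<in>U. l \<in> e"
proof -
  obtain s where s: "{e \<in> U. l \<in> e} = {s}"
    using assms by (rule leaf_edges_singleton)
  then have "s \<in> {e \<in> U. l \<in> e}"
    by simp
  then show ?thesis
    by blast
qed

lemma adjacent_leaves_cover: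
  assumes conn: "ug_connected V U" and l: "l \<in> leaves V U" and w: "w \<in> leaves V U"
    and lw: "{l, w} \<in> U"
  shows "V \<subseteq> {l, w}"
proof
  fix z assume "z \<in> V"
  moreover have "l \<in> V"
    using l by (simp add: leaves_def)
  ultimately have "\<exists>ws. is_walk U ws \<and> set ws \<subseteq> V \<and> hd ws = l \<and> last ws = z"
    using conn unfolding ug_connected_def by simp
  then obtain ws where ws: "is_walk U ws" "hd ws = l" "last ws = z"
    by blast
  then have "ws \<noteq> []"
    by (simp add: is_walk_def)
  have "ws ! i \<in> {l, w}" if "i < length ws" for i
    using that
  proof (induction i)
    case 0
    then show ?case
      using ws(2) \<open>ws \<noteq> []\<close> by (simp add: hd_conv_nth)
  next
    case (Suc i)
    then have step: "{ws ! i, ws ! Suc i} \<in> U"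
      using ws(1) by (simp add: is_walk_def)
    from Suc have "ws ! i \<in> {l, w}"
      by simp
    then have "{ws ! i, ws ! Suc i} = {l, w}"
    proof
      assume "ws ! i = l"
      then show ?thesis
        using leaf_edge_unique[OF l step _ lw] by simp
    next
      assume "ws ! i \<in> {w}"
      then show ?thesis
        using leaf_edge_unique[OF w step _ lw] by simp
    qed
    then show ?case
      by blast
  qed
  then have "ws ! (length ws - 1) \<in> {l, w}"
    using \<open>ws \<noteq> []\<close> by simp
  then show "z \<in> {l, w}"
    using ws(3) \<open>ws \<noteq> []\<close> by (simp add: last_conv_nth)
qed

lemma leaf_inner_neighbour:
  assumes tree: "is_ug_tree V U" and l: "l \<in> leaves V U" and inner: "V - leaves V U \<noteq> {}"
  shows "\<exists>w \<in> V - leaves V U. {l, w} \<in> U"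
proof -
  obtain e where e: "e \<in> U" "l \<in> e"
    using leaf_edge_exists[OF l] by blast
  have "e \<subseteq> V" "card e = 2"
    using tree e(1) unfolding is_ug_tree_def by blast+
  moreover obtain a b where "e = {a, b}"
    using \<open>card e = 2\<close> by (meson card_2_iff)
  ultimately obtain w where w: "e = {l, w}" "w \<in> V"
    using e(2) by (metis insert_commute insert_iff insert_subset singletonD)
  have "w \<notin> leaves V U"
  proof
    assume w_leaf: "w \<in> leaves V U"
    have "ug_connected V U"
      using tree by (simp add: is_ug_tree_def)
    moreover have "{l, w} \<in> U"
      using e(1) w(1) by simp
    ultimately have "V \<subseteq> {l, w}"
      using adjacent_leaves_cover l w_leaf by metis
    then show False
      using inner l w_leaf by blast
  qed
  then show ?thesis
    using w e(1) by blast
qed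

lemma spine_decompositionI:
  assumes tree: "directed_tree V E" and "distinct xs"
    and "\<And>l. l \<in> V - set xs \<Longrightarrow> att l \<in> set xs"
    and "\<And>u v. (u, v) \<in> E \<Longrightarrow>
       (\<exists>i. Suc i < length xs \<and> {u, v} = {xs ! i, xs ! Suc i})
       \<or> (u \<in> V - set xs \<and> v = att u) \<or> (v \<in> V - set xs \<and> u = att v)"
  shows "spine_decomposition V E xs att"
proof -
  have "finite V" "E \<subseteq> V \<times> V" "\<And>u v. (u, v) \<in> E \<Longrightarrow> (v, u) \<notin> E"
    using tree unfolding directed_tree_def is_dag_def by auto
  then show ?thesis
    using assms(2-4) by (rule spine_decomposition.intro)
qed

lemma directed_tree_edge_ends_distinct:
  assumes "directed_tree V E" and "(u, v) \<in> E"
  shows "u \<noteq> v"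
proof -
  have "{u, v} \<in> underlying E"
    using assms(2) by (rule in_underlyingI)
  then have "card {u, v} = 2"
    using assms(1) by (simp add: directed_tree_def is_ug_tree_def)
  then show ?thesis
    by (cases "u = v") auto
qed

lemma spine_decomposition_path_graph:
  assumes tree: "directed_tree V E" and path: "is_path_graph V (underlying E)"
  shows "\<exists>xs att. spine_decomposition V E xs att"
proof -
  obtain xs where xs: "distinct xs" "set xs = V"
    "underlying E = {{xs ! i, xs ! Suc i} | i. Suc i < length xs}"
    using path unfolding is_path_graph_def by blast
  have "spine_decomposition V E xs id"
  proof (rule spine_decompositionI[OF tree xs(1)])
    fix u v assume "(u, v) \<in> E"
    then have "{u, v} \<in> {{xs ! i, xs ! Suc i} | i. Suc i < length xs}"
      using in_underlyingI xs(3) by metis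
    then show "(\<exists>i. Suc i < length xs \<and> {u, v} = {xs ! i, xs ! Suc i})
      \<or> (u \<in> V - set xs \<and> v = id u) \<or> (v \<in> V - set xs \<and> u = id v)"
      by blast
  qed (use xs(2) in auto)
  then show ?thesis
    by blast
qed

lemma spine_decomposition_single_edge:
  assumes tree: "directed_tree V E" and ab: "(a, b) \<in> E" and V: "V \<subseteq> {a, b}"
  shows "spine_decomposition V E [a, b] id"
proof (rule spine_decompositionI[OF tree])
  have EV: "E \<subseteq> V \<times> V"
    using tree unfolding directed_tree_def is_dag_def by simp
  show "distinct [a, b]"
    using directed_tree_edge_ends_distinct[OF tree ab] by simp
  show "l \<in> V - set [a, b] \<Longrightarrow> id l \<in> set [a, b]" for l
    using V by auto
  fix u v assume uv: "(u, v) \<in> E"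
  then have "u \<in> {a, b}" "v \<in> {a, b}" "u \<noteq> v"
    using EV V directed_tree_edge_ends_distinct[OF tree uv] by auto
  then have "{u, v} = {[a, b] ! 0, [a, b] ! Suc 0}"
    by auto
  then show "(\<exists>i. Suc i < length [a, b] \<and> {u, v} = {[a, b] ! i, [a, b] ! Suc i})
    \<or> (u \<in> V - set [a, b] \<and> v = id u) \<or> (v \<in> V - set [a, b] \<and> u = id v)"
    by (intro disjI1 exI[of _ 0]) simp
qed

lemma spine_decomposition_pendant_leaves:
  assumes tree: "directed_tree V E"
    and inner: "V - leaves V (underlying E) \<noteq> {}"
    and xs: "distinct xs" "set xs = V - leaves V (underlying E)"
      "{e \<in> underlying E. e \<subseteq> V - leaves V (underlying E)}
         = {{xs ! i, xs ! Suc i} | i. Suc i < length xs}"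
  shows "\<exists>att. spine_decomposition V E xs att"
proof -
  define U where "U = underlying E"
  have utree: "is_ug_tree V U" and EV: "E \<subseteq> V \<times> V"
    using tree unfolding directed_tree_def is_dag_def U_def by simp_all
  have edge_in_U: "{u, v} \<in> U" if "(u, v) \<in> E" for u v
    using that unfolding U_def by (rule in_underlyingI)
  define att where "att l = (SOME w. w \<in> set xs \<and> {l, w} \<in> U)" for l
  have att: "att l \<in> set xs \<and> {l, att l} \<in> U" if "l \<in> leaves V U" for l
  proof -
    have "\<exists>w. w \<in> set xs \<and> {l, w} \<in> U"
      using leaf_inner_neighbour[OF utree that] inner xs(2) unfolding U_def by blast
    then show ?thesis
      unfolding att_def by (rule someI_ex)
  qed
  have leaf_edge: "v = att u" if "(u, v) \<in> E \<or> (v, u) \<in> E" "u \<in> leaves V U" for u v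
  proof -
    have "{u, v} \<in> U"
      using that(1) edge_in_U insert_commute by metis
    then have "{u, v} = {u, att u}"
      using leaf_edge_unique[OF that(2)] att[OF that(2)] by simp
    then show ?thesis
      by (auto simp: doubleton_eq_iff)
  qed
  have "spine_decomposition V E xs att"
  proof (rule spine_decompositionI[OF tree xs(1)])
    show "l \<in> V - set xs \<Longrightarrow> att l \<in> set xs" for l
      using xs(2) att by (simp add: U_def)
    fix u v assume uv: "(u, v) \<in> E"
    then have "u \<in> V" "v \<in> V"
      using EV by auto
    then consider "u \<in> set xs" "v \<in> set xs" | "u \<in> V - set xs" | "v \<in> V - set xs"
      by blast
    then show "(\<exists>i. Suc i < length xs \<and> {u, v} = {xs ! i, xs ! Suc i})
      \<or> (u \<in> V - set xs \<and> v = att u) \<or> (v \<in> V - set xs \<and> u = att v)"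
    proof cases
      case 1
      then have "{u, v} \<in> {e \<in> underlying E. e \<subseteq> V - leaves V (underlying E)}"
        using xs(2) edge_in_U[OF uv] by (simp add: U_def)
      then show ?thesis
        unfolding xs(3) by blast
    next
      case 2
      then show ?thesis
        using leaf_edge uv xs(2) by (simp add: U_def)
    next
      case 3
      then show ?thesis
        using leaf_edge uv xs(2) by (simp add: U_def)
    qed
  qed
  then show ?thesis
    by blast
qed

lemma spine_decomposition_caterpillar:
  assumes tree: "directed_tree V E" and "E \<noteq> {}" and cat: "is_caterpillar V (underlying E)"
  shows "\<exists>xs att. spine_decomposition V E xs att"
proof (cases "V - leaves V (underlying E) = {}")
  case True
  obtain a b where ab: "(a, b) \<in> E"
    using \<open>E \<noteq> {}\<close> by auto
  have "E \<subseteq> V \<times> V" and conn: "ug_connected V (underlying E)"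
    using tree unfolding directed_tree_def is_dag_def is_ug_tree_def by simp_all
  then have "a \<in> leaves V (underlying E)" "b \<in> leaves V (underlying E)"
    using ab True by auto
  then have "V \<subseteq> {a, b}"
    using conn in_underlyingI[OF ab] by (intro adjacent_leaves_cover)
  then show ?thesis
    using spine_decomposition_single_edge[OF tree ab] by blast
next
  case False
  have "is_path_graph (V - leaves V (underlying E))
      {e \<in> underlying E. e \<subseteq> V - leaves V (underlying E)}"
    using cat by (simp add: is_caterpillar_def Let_def)
  then obtain xs where "distinct xs" "set xs = V - leaves V (underlying E)"
    "{e \<in> underlying E. e \<subseteq> V - leaves V (underlying E)}
       = {{xs ! i, xs ! Suc i} | i. Suc i < length xs}"
    unfolding is_path_graph_def by blast
  then have "\<exists>att. spine_decomposition V E xs att"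
    by (rule spine_decomposition_pendant_leaves[OF tree False])
  then show ?thesis
    by blast
qed

theorem mainTheorem7:
  fixes V :: "'a set" and E :: "('a \<times> 'a) set"
  assumes "directed_tree V E"
    and "E \<noteq> {}"
    and "is_path_graph V (underlying E) \<or> is_caterpillar V (underlying E)"
  shows "has_span V E 1"
proof -
  obtain xs att where "spine_decomposition V E xs att"
    using assms(3) spine_decomposition_path_graph[OF assms(1)]
      spine_decomposition_caterpillar[OF assms(1,2)] by blast
  then show ?thesis
    using assms(2) by (rule spine_decomposition.has_span_1)
qed

end
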